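(* Let $K$ be an algebraically closed field of characteristic zero, $\deg_1$ the standard homogeneous degree on $K[x_1,\dots,x_n]$, $\Phi=(f_1,\dots,f_n)$ a polynomial automorphism of $K^n$, $d_i=\deg_1(f_i)$, and $\nabla=d_1+\dots+d_n-n$. Then for every $P\in K[x_1,\dots,x_n]$, $\deg_1(P\circ\Phi)\ge\deg_1(\frac{\partial P}{\partial x_n}\circ\Phi)+d_n-\nabla$, and more generally $\deg_1(P\circ\Phi)\ge\deg_1(\frac{\partial^kP}{\partial x_n^k}\circ\Phi)+kd_n-k\nabla$ for all $k\ge 0$. *)

theory Defs
  imports "HOL-Library.Poly_Mapping" "HOL-Computational_Algebra.Polynomial"
begin

text \<open>Multivariate polynomials over K: finitely supported maps from monomials
(exponent vectors, variable x_(i+1) has index i) to coefficients.\<close>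

type_synonym 'a mpoly = "(nat \<Rightarrow>\<^sub>0 nat) \<Rightarrow>\<^sub>0 'a"

definition mvar :: "nat \<Rightarrow> 'a::comm_ring_1 mpoly" where
  "mvar i = Poly_Mapping.single (Poly_Mapping.single i 1) 1"

definition in_vars :: "nat \<Rightarrow> 'a::zero mpoly \<Rightarrow> bool" where
  "in_vars n p \<longleftrightarrow> (\<forall>m \<in> Poly_Mapping.keys p. Poly_Mapping.keys m \<subseteq> {..<n})"

definition mon_deg :: "(nat \<Rightarrow>\<^sub>0 nat) \<Rightarrow> nat" where
  "mon_deg m = (\<Sum>i\<in>Poly_Mapping.keys m. Poly_Mapping.lookup m i)"

definition tdeg :: "'a::zero mpoly \<Rightarrow> nat" where
  "tdeg p = Max (insert 0 (mon_deg ` Poly_Mapping.keys p))"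

definition msubst :: "(nat \<Rightarrow> 'a::comm_ring_1 mpoly) \<Rightarrow> 'a mpoly \<Rightarrow> 'a mpoly" where
  "msubst \<Phi> p = (\<Sum>m\<in>Poly_Mapping.keys p.
      Poly_Mapping.single 0 (Poly_Mapping.lookup p m) *
      (\<Prod>i\<in>Poly_Mapping.keys m. (\<Phi> i) ^ (Poly_Mapping.lookup m i)))"

definition mpderiv :: "nat \<Rightarrow> 'a::comm_ring_1 mpoly \<Rightarrow> 'a mpoly" where
  "mpderiv j p = (\<Sum>m\<in>Poly_Mapping.keys p.
      Poly_Mapping.single (m - Poly_Mapping.single j 1)
        (of_nat (Poly_Mapping.lookup m j) * Poly_Mapping.lookup p m))"

definition poly_automorphism :: "nat \<Rightarrow> (nat \<Rightarrow> 'a::comm_ring_1 mpoly) \<Rightarrow> bool" where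
  "poly_automorphism n \<Phi> \<longleftrightarrow>
     (\<forall>i<n. in_vars n (\<Phi> i)) \<and>
     (\<exists>\<Psi>. (\<forall>i<n. in_vars n (\<Psi> i)) \<and>
          (\<forall>i<n. msubst \<Psi> (\<Phi> i) = mvar i) \<and>
          (\<forall>i<n. msubst \<Phi> (\<Psi> i) = mvar i))"

end

theory Submission
  imports Defs "Jordan_Normal_Form.Determinant"
begin

text \<open>Let J be the Jacobian matrix of \<Phi> and v = (grad Q) \<circ> \<Phi>. By the chain rule the gradient
of Q \<circ> \<Phi> is J^T v. Since \<Phi> has a polynomial inverse \<Psi>, the matrix J has the inverse
(Jacobian of \<Psi>) \<circ> \<Phi>, so det J is a unit of K[x], i.e. a nonzero constant, and Cramer's rule gives
  det J * (\<partial>Q/\<partial>x_n) \<circ> \<Phi> = \<Sum>_j \<partial>(Q \<circ> \<Phi>)/\<partial>x_j * C_nj,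
where the cofactor C_nj only involves the gradients of f_1, ..., f_(n-1). Hence
deg C_nj \<le> (d_1 - 1) + ... + (d_(n-1) - 1) = \<nabla> - d_n + 1, while deg \<partial>(Q \<circ> \<Phi>)/\<partial>x_j \<le> deg (Q \<circ> \<Phi>) - 1.
This is the case k = 1; the general case follows by applying it to the iterated derivatives.\<close>

abbreviation lookup where "lookup \<equiv> Poly_Mapping.lookup"
abbreviation keys where "keys \<equiv> Poly_Mapping.keys"
abbreviation single where "single \<equiv> Poly_Mapping.single"

section \<open>Finitely supported maps\<close>

lemma poly_mapping_sum_single_superset:
  assumes "finite S" "keys p \<subseteq> S"
  shows "(\<Sum>m\<in>S. single m (lookup p m)) = p"
  by (rule poly_mapping_eqI)
     (use assms in \<open>auto simp: lookup_sum lookup_single when_def in_keys_iff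
                          sum.delta[OF assms(1)] split: if_splits\<close>)

lemma poly_mapping_sum_single: "(\<Sum>m\<in>keys p. single m (lookup p m)) = p"
  by (simp add: poly_mapping_sum_single_superset)

lemma mult_poly_mapping_sum_single:
  "p * q = (\<Sum>a\<in>keys p. \<Sum>b\<in>keys q. single (a + b) (lookup p a * lookup q b))"
proof -
  have "p * q = (\<Sum>a\<in>keys p. single a (lookup p a)) * (\<Sum>b\<in>keys q. single b (lookup q b))"
    by (simp add: poly_mapping_sum_single)
  then show ?thesis by (simp add: sum_product mult_single)
qed

lemma single_cong_nonzero: "(c \<noteq> 0 \<Longrightarrow> a = b) \<Longrightarrow> single a c = single b c"
  by (cases "c = 0") auto

lemma lookup_mult_Max_keys:
  fixes p q :: "'k::{ordered_cancel_comm_monoid_add, linorder} \<Rightarrow>\<^sub>0 'a::comm_semiring_1"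
  assumes "p \<noteq> 0" "q \<noteq> 0"
  shows "lookup (p * q) (Max (keys p) + Max (keys q)) = lookup p (Max (keys p)) * lookup q (Max (keys q))"
proof -
  define a where "a = Max (keys p)"
  define b where "b = Max (keys q)"
  have a: "a \<in> keys p" "\<And>x. x \<in> keys p \<Longrightarrow> x \<le> a"
    unfolding a_def using assms by auto
  have b: "b \<in> keys q" "\<And>y. y \<in> keys q \<Longrightarrow> y \<le> b"
    unfolding b_def using assms by auto
  have top: "x + y = a + b \<longleftrightarrow> x = a \<and> y = b" if "x \<in> keys p" "y \<in> keys q" for x y
  proof
    assume "x + y = a + b"
    moreover have "x \<le> a" "y \<le> b" using a(2)[OF that(1)] b(2)[OF that(2)] .
    ultimately show "x = a \<and> y = b"
      using add_less_le_mono[of x a y b] add_le_less_mono[of x a y b] by force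
  qed auto
  have "lookup (p * q) (a + b) =
      (\<Sum>x\<in>keys p. \<Sum>y\<in>keys q. if x = a \<and> y = b then lookup p x * lookup q y else 0)"
    unfolding mult_poly_mapping_sum_single[of p q] lookup_sum
    by (intro sum.cong refl) (auto simp: lookup_single when_def top)
  also have "\<dots> = (\<Sum>x\<in>keys p. if x = a then lookup p a * lookup q b else 0)"
    using b(1) by (intro sum.cong refl) auto
  also have "\<dots> = lookup p a * lookup q b"
    using a(1) by simp
  finally show ?thesis unfolding a_def b_def .
qed

lemma zero_le_monomial: "(0::nat \<Rightarrow>\<^sub>0 nat) \<le> k"
proof transfer
  fix k :: "nat \<Rightarrow> nat"
  show "less_fun (\<lambda>k. 0) k \<or> (\<lambda>k. 0) = k"
  proof (cases "k = (\<lambda>k. 0)")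
    case False
    then obtain i where "k i \<noteq> 0" by auto
    define i0 where "i0 = (LEAST i. k i \<noteq> 0)"
    have "k i0 \<noteq> 0" unfolding i0_def by (rule LeastI) fact
    moreover have "\<forall>j<i0. k j = 0" unfolding i0_def using not_less_Least by blast
    ultimately show ?thesis unfolding less_fun_def by auto
  qed simp
qed

lemma mpoly_unit_const:
  fixes p q :: "'a::idom mpoly"
  assumes "p * q = 1"
  shows "\<exists>c. p = single 0 c"
proof -
  have nz: "p \<noteq> 0" "q \<noteq> 0" using assms by auto
  define a where "a = Max (keys p)"
  define b where "b = Max (keys q)"
  have "a \<in> keys p" "b \<in> keys q" unfolding a_def b_def using nz by auto
  then have "lookup (p * q) (a + b) \<noteq> 0"
    using lookup_mult_Max_keys[OF nz] by (simp add: a_def b_def in_keys_iff)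
  then have "a + b = 0" using assms by (simp add: lookup_one when_def split: if_splits)
  then have "a = 0" by (metis add_is_0 lookup_add lookup_zero poly_mapping_eqI)
  then have "keys p \<subseteq> {0}"
    using zero_le_monomial nz unfolding a_def by (metis Max_ge antisym finite_keys insertCI subsetI)
  then have "p = (\<Sum>m\<in>{0}. single m (lookup p m))"
    by (intro poly_mapping_sum_single_superset[symmetric]) auto
  then show ?thesis by auto
qed

section \<open>Substitution\<close>

definition mon_subst :: "(nat \<Rightarrow> 'a::comm_ring_1 mpoly) \<Rightarrow> (nat \<Rightarrow>\<^sub>0 nat) \<Rightarrow> 'a mpoly" where
  "mon_subst \<Phi> m = (\<Prod>i\<in>keys m. \<Phi> i ^ lookup m i)"

lemma mon_subst_superset:
  assumes "finite S" "keys m \<subseteq> S"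
  shows "mon_subst \<Phi> m = (\<Prod>i\<in>S. \<Phi> i ^ lookup m i)"
  unfolding mon_subst_def
  by (rule prod.mono_neutral_left[OF assms]) (auto simp: in_keys_iff)

lemma mon_subst_add: "mon_subst \<Phi> (a + b) = mon_subst \<Phi> a * mon_subst \<Phi> b"
proof -
  let ?S = "keys a \<union> keys b"
  have "mon_subst \<Phi> (a + b) = (\<Prod>i\<in>?S. \<Phi> i ^ lookup (a + b) i)"
    by (rule mon_subst_superset) (use keys_add[of a b] in auto)
  also have "\<dots> = (\<Prod>i\<in>?S. \<Phi> i ^ lookup a i) * (\<Prod>i\<in>?S. \<Phi> i ^ lookup b i)"
    by (simp add: lookup_add power_add prod.distrib)
  finally show ?thesis by (simp add: mon_subst_superset[symmetric])
qed

lemma mon_subst_mvar: "mon_subst mvar m = (single m 1 :: 'a::comm_ring_1 mpoly)"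
proof -
  have power: "mvar i ^ k = single (single i k) (1::'a)" for i k
    by (induction k) (auto simp: mvar_def mult_single single_add[symmetric])
  have prod_single: "(\<Prod>i\<in>I. single (f i) (1::'a)) = single (sum f I) 1"
    for I :: "nat set" and f :: "nat \<Rightarrow> nat \<Rightarrow>\<^sub>0 nat"
    by (induction I rule: infinite_finite_induct) (auto simp: mult_single)
  have "mon_subst mvar m = (\<Prod>i\<in>keys m. single (single i (lookup m i)) (1::'a))"
    by (simp add: mon_subst_def power)
  also have "\<dots> = single (\<Sum>i\<in>keys m. single i (lookup m i)) 1"
    by (rule prod_single)
  finally show ?thesis by (simp add: poly_mapping_sum_single)
qed

lemma msubst_conv_mon_subst: "msubst \<Phi> p = (\<Sum>m\<in>keys p. single 0 (lookup p m) * mon_subst \<Phi> m)"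
  by (simp add: msubst_def mon_subst_def)

lemma msubst_superset:
  assumes "finite S" "keys p \<subseteq> S"
  shows "msubst \<Phi> p = (\<Sum>m\<in>S. single 0 (lookup p m) * mon_subst \<Phi> m)"
  unfolding msubst_conv_mon_subst by (rule sum.mono_neutral_left[OF assms]) (auto simp: in_keys_iff)

lemma msubst_single: "msubst \<Phi> (single m c) = single 0 c * mon_subst \<Phi> m"
  by (simp add: msubst_conv_mon_subst)

lemma msubst_const [simp]: "msubst \<Phi> (single 0 c) = single 0 c"
  by (simp add: msubst_single mon_subst_def)

lemma msubst_zero [simp]: "msubst \<Phi> 0 = 0"
  by (simp add: msubst_def)

lemma msubst_one [simp]: "msubst \<Phi> 1 = 1"
  using msubst_const[of \<Phi> 1] by simp

lemma msubst_mvar [simp]: "msubst \<Phi> (mvar i) = \<Phi> i"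
  by (simp add: mvar_def msubst_single mon_subst_def)

lemma msubst_add: "msubst \<Phi> (p + q) = msubst \<Phi> p + msubst \<Phi> q"
proof -
  let ?S = "keys p \<union> keys q"
  have "msubst \<Phi> (p + q) = (\<Sum>m\<in>?S. single 0 (lookup (p + q) m) * mon_subst \<Phi> m)"
    by (rule msubst_superset) (use keys_add[of p q] in auto)
  also have "\<dots> = (\<Sum>m\<in>?S. single 0 (lookup p m) * mon_subst \<Phi> m)
                 + (\<Sum>m\<in>?S. single 0 (lookup q m) * mon_subst \<Phi> m)"
    by (simp add: lookup_add single_add distrib_right sum.distrib)
  finally show ?thesis by (simp add: msubst_superset[symmetric])
qed

lemma msubst_sum: "msubst \<Phi> (\<Sum>i\<in>I. f i) = (\<Sum>i\<in>I. msubst \<Phi> (f i))"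
  by (induction I rule: infinite_finite_induct) (auto simp: msubst_add)

lemma msubst_mult: "msubst \<Phi> (p * q) = msubst \<Phi> p * msubst \<Phi> q"
proof -
  have single_0_mult: "single 0 (a * b) = single 0 a * (single 0 b :: 'a mpoly)" for a b
    by (simp add: mult_single)
  have "msubst \<Phi> (p * q) = (\<Sum>a\<in>keys p. \<Sum>b\<in>keys q.
          single 0 (lookup p a * lookup q b) * mon_subst \<Phi> (a + b))"
    unfolding mult_poly_mapping_sum_single[of p q] by (simp add: msubst_sum msubst_single)
  also have "\<dots> = (\<Sum>a\<in>keys p. \<Sum>b\<in>keys q.
          (single 0 (lookup p a) * mon_subst \<Phi> a) * (single 0 (lookup q b) * mon_subst \<Phi> b))"
    by (intro sum.cong refl) (simp add: mon_subst_add single_0_mult ac_simps)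
  finally show ?thesis by (simp add: msubst_conv_mon_subst sum_product)
qed

lemma mpoly_induct_vars [consumes 1, case_names const var add mult]:
  fixes p :: "'a::comm_ring_1 mpoly"
  assumes "\<forall>m\<in>keys p. keys m \<subseteq> V"
    and const: "\<And>c. P (single 0 c)"
    and var: "\<And>i. i \<in> V \<Longrightarrow> P (mvar i)"
    and add: "\<And>p q. P p \<Longrightarrow> P q \<Longrightarrow> P (p + q)"
    and mult: "\<And>p q. P p \<Longrightarrow> P q \<Longrightarrow> P (p * q)"
  shows "P p"
proof -
  have sum: "P (sum f I)" if "\<forall>i\<in>I. P (f i)" for f :: "_ \<Rightarrow> 'a mpoly" and I
    using that const[of 0] by (induction I rule: infinite_finite_induct) (auto intro: add)
  have prod: "P (prod f I)" if "\<forall>i\<in>I. P (f i)" for f :: "_ \<Rightarrow> 'a mpoly" and I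
    using that const[of 1] by (induction I rule: infinite_finite_induct) (auto intro: mult)
  have power: "P (r ^ k)" if "P r" for r k
    using that const[of 1] by (induction k) (auto intro: mult)
  have "P (single m c)" if "m \<in> keys p" for m c
  proof -
    have "P (mon_subst mvar m)"
      unfolding mon_subst_def using assms(1) that by (auto intro!: prod power var)
    then have "P (single 0 c * mon_subst mvar m)" by (rule mult[OF const])
    then show ?thesis by (simp add: mon_subst_mvar mult_single)
  qed
  then show ?thesis
    using sum[of "keys p" "\<lambda>m. single m (lookup p m)"] by (simp add: poly_mapping_sum_single)
qed

lemma msubst_cong:
  assumes "\<And>m i. m \<in> keys p \<Longrightarrow> i \<in> keys m \<Longrightarrow> \<Phi> i = \<Phi>' i"
  shows "msubst \<Phi> p = msubst \<Phi>' p"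
  unfolding msubst_def using assms by (intro sum.cong refl arg_cong2[where f="(*)"] prod.cong) auto

lemma msubst_mvar_eq:
  assumes "in_vars n p" "\<And>i. i < n \<Longrightarrow> \<Phi> i = mvar i"
  shows "msubst \<Phi> p = (p :: 'a::comm_ring_1 mpoly)"
proof -
  have "msubst \<Phi> p = msubst mvar p"
    by (rule msubst_cong) (use assms in \<open>auto simp: in_vars_def\<close>)
  then show ?thesis by (simp add: msubst_conv_mon_subst mon_subst_mvar mult_single poly_mapping_sum_single)
qed

lemma msubst_msubst:
  "msubst \<Psi> (msubst \<Phi> p) = msubst (\<lambda>i. msubst \<Psi> (\<Phi> i)) (p :: 'a::comm_ring_1 mpoly)"
  by (rule mpoly_induct_vars[where V = UNIV and p = p]) (auto simp: msubst_add msubst_mult)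

lemma msubst_left_inverse:
  assumes "\<forall>i<n. msubst \<Psi> (\<Phi> i) = mvar i" "in_vars n p"
  shows "msubst \<Psi> (msubst \<Phi> p) = (p :: 'a::comm_ring_1 mpoly)"
  using assms by (simp add: msubst_msubst msubst_mvar_eq)

section \<open>Partial derivatives and the chain rule\<close>

lemma mpderiv_superset:
  assumes "finite S" "keys p \<subseteq> S"
  shows "mpderiv j p = (\<Sum>m\<in>S. single (m - single j 1) (of_nat (lookup m j) * lookup p m))"
  unfolding mpderiv_def by (rule sum.mono_neutral_left[OF assms]) (auto simp: in_keys_iff)

lemma mpderiv_single: "mpderiv j (single m c) = single (m - single j 1) (of_nat (lookup m j) * c)"
  by (simp add: mpderiv_def)

lemma mpderiv_zero [simp]: "mpderiv j 0 = 0"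
  by (simp add: mpderiv_def)

lemma mpderiv_const [simp]: "mpderiv j (single 0 c) = 0"
  by (simp add: mpderiv_single)

lemma mpderiv_mvar: "mpderiv j (mvar i) = (if i = j then 1 else (0::'a::comm_ring_1 mpoly))"
  by (auto simp: mvar_def mpderiv_single lookup_single)

lemma mpderiv_add: "mpderiv j (p + q) = mpderiv j p + mpderiv j q"
proof -
  let ?S = "keys p \<union> keys q"
  have "mpderiv j (p + q) = (\<Sum>m\<in>?S. single (m - single j 1) (of_nat (lookup m j) * lookup (p + q) m))"
    by (rule mpderiv_superset) (use keys_add[of p q] in auto)
  then show ?thesis
    using mpderiv_superset[of ?S p j] mpderiv_superset[of ?S q j]
    by (simp add: lookup_add single_add distrib_left sum.distrib)
qed

lemma mpderiv_sum: "mpderiv j (\<Sum>i\<in>I. f i) = (\<Sum>i\<in>I. mpderiv j (f i))"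
  by (induction I rule: infinite_finite_induct) (auto simp: mpderiv_add)

lemma mpderiv_mult_single:
  "mpderiv j (single a c * single b d) =
     mpderiv j (single a c) * single b d + single a c * mpderiv j (single b (d::'a::comm_ring_1))"
proof -
  let ?e = "single j (1::nat)"
  have shift_left: "single (a - ?e + b) (of_nat (lookup a j) * c * d) =
      single (a + b - ?e) (of_nat (lookup a j) * c * d)"
    by (rule single_cong_nonzero, rule poly_mapping_eqI, cases "lookup a j")
       (auto simp: lookup_add lookup_minus lookup_single when_def)
  have shift_right: "single (a + (b - ?e)) (c * (of_nat (lookup b j) * d)) =
      single (a + b - ?e) (c * (of_nat (lookup b j) * d))"
    by (rule single_cong_nonzero, rule poly_mapping_eqI, cases "lookup b j")
       (auto simp: lookup_add lookup_minus lookup_single when_def)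
  have "mpderiv j (single a c) * single b d + single a c * mpderiv j (single b d) =
      single (a - ?e + b) (of_nat (lookup a j) * c * d) + single (a + (b - ?e)) (c * (of_nat (lookup b j) * d))"
    by (simp add: mpderiv_single mult_single mult.assoc)
  also have "\<dots> = mpderiv j (single a c * single b d)"
    unfolding shift_left shift_right
    by (simp add: mult_single mpderiv_single lookup_add single_add[symmetric] algebra_simps)
  finally show ?thesis ..
qed

lemma mpderiv_mult: "mpderiv j (p * q) = mpderiv j p * q + p * mpderiv j (q :: 'a::comm_ring_1 mpoly)"
proof -
  have "mpderiv j (p * q) = mpderiv j ((\<Sum>a\<in>keys p. single a (lookup p a)) * (\<Sum>b\<in>keys q. single b (lookup q b)))"
    by (simp add: poly_mapping_sum_single)
  also have "\<dots> = (\<Sum>a\<in>keys p. \<Sum>b\<in>keys q. mpderiv j (single a (lookup p a) * single b (lookup q b)))"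
    by (simp add: sum_product mpderiv_sum)
  also have "\<dots> = mpderiv j (\<Sum>a\<in>keys p. single a (lookup p a)) * (\<Sum>b\<in>keys q. single b (lookup q b))
                 + (\<Sum>a\<in>keys p. single a (lookup p a)) * mpderiv j (\<Sum>b\<in>keys q. single b (lookup q b))"
    by (simp add: mpderiv_mult_single sum.distrib sum_product mpderiv_sum)
  finally show ?thesis by (simp add: poly_mapping_sum_single)
qed

lemma mpderiv_msubst:
  fixes p :: "'a::comm_ring_1 mpoly"
  assumes "finite I" "\<forall>m\<in>keys p. keys m \<subseteq> I"
  shows "mpderiv j (msubst \<Phi> p) = (\<Sum>i\<in>I. msubst \<Phi> (mpderiv i p) * mpderiv j (\<Phi> i))"
  using assms(2)
proof (induction p rule: mpoly_induct_vars[where V = I])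
  case (var i)
  have "(\<Sum>l\<in>I. msubst \<Phi> (mpderiv l (mvar i)) * mpderiv j (\<Phi> l)) =
        (\<Sum>l\<in>I. if l = i then mpderiv j (\<Phi> i) else 0)"
    by (rule sum.cong) (simp_all add: mpderiv_mvar)
  then show ?case using var assms(1) by simp
next
  case (add p q)
  then show ?case by (simp only: msubst_add mpderiv_add distrib_right sum.distrib)
next
  case (mult p q)
  have "mpderiv j (msubst \<Phi> (p * q)) =
      mpderiv j (msubst \<Phi> p) * msubst \<Phi> q + msubst \<Phi> p * mpderiv j (msubst \<Phi> q)"
    by (simp only: msubst_mult mpderiv_mult)
  also have "\<dots> = (\<Sum>i\<in>I. (msubst \<Phi> (mpderiv i p) * msubst \<Phi> q + msubst \<Phi> p * msubst \<Phi> (mpderiv i q))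
                    * mpderiv j (\<Phi> i))"
    unfolding mult.IH sum_distrib_left sum_distrib_right sum.distrib[symmetric]
    by (intro sum.cong refl) (simp add: algebra_simps)
  finally show ?case by (simp only: mpderiv_mult msubst_add msubst_mult)
qed simp

lemma keys_mpderiv:
  assumes "m' \<in> keys (mpderiv j p)"
  obtains m where "m \<in> keys p" "m' = m - single j 1" "lookup m j \<noteq> 0"
proof -
  have "keys (mpderiv j p) \<subseteq> (\<Union>m\<in>keys p. keys (single (m - single j 1) (of_nat (lookup m j) * lookup p m)))"
    unfolding mpderiv_def by (rule keys_sum)
  with assms obtain m where m: "m \<in> keys p" "m' \<in> keys (single (m - single j 1) (of_nat (lookup m j) * lookup p m))"
    by blast
  then have "m' = m - single j 1" "of_nat (lookup m j) * lookup p m \<noteq> 0"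
    by (simp_all split: if_splits)
  moreover have "lookup m j \<noteq> 0"
    using calculation(2) by (metis mult_zero_left of_nat_0)
  ultimately show ?thesis using m(1) that by blast
qed

lemma in_vars_mpderiv: "in_vars n p \<Longrightarrow> in_vars n (mpderiv j p)"
  unfolding in_vars_def
proof (intro ballI subsetI)
  fix m' i
  assume vars: "\<forall>m\<in>keys p. keys m \<subseteq> {..<n}" and "m' \<in> keys (mpderiv j p)" and i: "i \<in> keys m'"
  then obtain m where m: "m \<in> keys p" "m' = m - single j 1" by (auto elim: keys_mpderiv)
  have "i \<in> keys m" using i m(2) by (auto simp: in_keys_iff lookup_minus)
  then show "i \<in> {..<n}" using vars m(1) by blast
qed

section \<open>Total degree\<close>

lemma tdeg_le_iff: "tdeg p \<le> d \<longleftrightarrow> (\<forall>m\<in>keys p. mon_deg m \<le> d)"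
  unfolding tdeg_def by (subst Max_le_iff) auto

lemma mon_deg_le_tdeg: "m \<in> keys p \<Longrightarrow> mon_deg m \<le> tdeg p"
  using tdeg_le_iff[of p "tdeg p"] by auto

lemma mon_deg_add: "mon_deg (a + b) = mon_deg a + mon_deg b"
proof -
  have eq: "mon_deg m = (\<Sum>i\<in>keys a \<union> keys b. lookup m i)" if "keys m \<subseteq> keys a \<union> keys b" for m
    unfolding mon_deg_def by (rule sum.mono_neutral_left) (use that in \<open>auto simp: in_keys_iff\<close>)
  show ?thesis
    using eq[of "a + b"] eq[of a] eq[of b] keys_add[of a b] by (simp add: lookup_add sum.distrib)
qed

lemma lookup_le_mon_deg: "lookup m j \<le> mon_deg m"
  by (cases "j \<in> keys m") (auto simp: mon_deg_def in_keys_iff intro: member_le_sum)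

lemma tdeg_const [simp]: "tdeg (single 0 c) = 0"
  by (simp add: tdeg_def mon_deg_def)

lemma tdeg_uminus [simp]: "tdeg (- p) = tdeg (p :: 'a::ab_group_add mpoly)"
  by (simp add: tdeg_def)

lemma tdeg_sum_le: "(\<And>i. i \<in> I \<Longrightarrow> tdeg (f i) \<le> d) \<Longrightarrow> tdeg (sum f I) \<le> d"
  unfolding tdeg_le_iff using keys_sum[of f I] by blast

lemma tdeg_mult_le: "tdeg (p * q) \<le> tdeg p + tdeg q"
  unfolding tdeg_le_iff
proof
  fix m assume "m \<in> keys (p * q)"
  then obtain a b where "m = a + b" "a \<in> keys p" "b \<in> keys q"
    using keys_mult[of p q] by blast
  then show "mon_deg m \<le> tdeg p + tdeg q"
    by (simp add: mon_deg_add add_mono mon_deg_le_tdeg)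
qed

lemma tdeg_prod_le: "tdeg (prod f I) \<le> (\<Sum>i\<in>I. tdeg (f i :: 'a::comm_ring_1 mpoly))"
proof (induction I rule: infinite_finite_induct)
  case (insert x F)
  then show ?case using tdeg_mult_le[of "f x" "prod f F"] by simp
qed (auto simp flip: single_one)

lemma tdeg_const_mult_le: "tdeg (single 0 c * p) \<le> tdeg (p::'a::comm_ring_1 mpoly)"
  using tdeg_mult_le[of "single 0 c" p] by simp

lemma tdeg_const_mult:
  assumes "c \<noteq> 0"
  shows "tdeg (single 0 c * p) = tdeg (p::'a::idom mpoly)"
proof -
  have "keys (single 0 c * p) = keys p"
    unfolding mult_map_scale_conv_mult[symmetric] using assms
    by (auto simp: in_keys_iff map.rep_eq when_def)
  then show ?thesis by (simp add: tdeg_def)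
qed

lemma tdeg_mpderiv: "tdeg (mpderiv j p) \<le> tdeg p - 1"
  unfolding tdeg_le_iff
proof
  fix m' assume "m' \<in> keys (mpderiv j p)"
  then obtain m where m: "m \<in> keys p" "m' = m - single j 1" "lookup m j \<noteq> 0"
    by (rule keys_mpderiv)
  then have "m = m' + single j 1"
    by (intro poly_mapping_eqI) (auto simp: lookup_add lookup_minus lookup_single when_def)
  moreover have "mon_deg (single j (1::nat)) = 1"
    by (simp add: mon_deg_def)
  ultimately have "mon_deg m = mon_deg m' + 1"
    by (simp add: mon_deg_add)
  with mon_deg_le_tdeg[OF m(1)] show "mon_deg m' \<le> tdeg p - 1" by simp
qed

lemma tdeg_eq_0_imp_const:
  fixes p :: "'a::comm_monoid_add mpoly"
  assumes "tdeg p = 0"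
  shows "p = single 0 (lookup p 0)"
proof -
  have "m = 0" if "m \<in> keys p" for m
  proof (rule poly_mapping_eqI)
    fix i
    show "lookup m i = lookup 0 i"
      using lookup_le_mon_deg[of m i] mon_deg_le_tdeg[OF that] assms by simp
  qed
  then have "p = (\<Sum>m\<in>{0}. single m (lookup p m))"
    by (intro poly_mapping_sum_single_superset[symmetric]) auto
  then show ?thesis by simp
qed

lemma tdeg_det_le:
  fixes M :: "'a::comm_ring_1 mpoly mat"
  assumes M: "M \<in> carrier_mat m m"
    and r: "\<And>i j. i < m \<Longrightarrow> j < m \<Longrightarrow> tdeg (M $$ (i, j)) \<le> r i"
  shows "tdeg (det M) \<le> (\<Sum>i<m. r i)"
  unfolding det_def'[OF M]
proof (rule tdeg_sum_le)
  fix p assume "p \<in> {p. p permutes {0..<m}}"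
  then have p: "\<And>i. i < m \<Longrightarrow> p i < m" using permutes_in_image by fastforce
  have "tdeg (signof p * (\<Prod>i = 0..<m. M $$ (i, p i))) \<le> tdeg (\<Prod>i = 0..<m. M $$ (i, p i))"
    using tdeg_const_mult_le[of "of_int (signof p)"] by (simp add: single_of_int)
  also have "\<dots> \<le> (\<Sum>i = 0..<m. tdeg (M $$ (i, p i)))" by (rule tdeg_prod_le)
  also have "\<dots> \<le> (\<Sum>i<m. r i)" by (auto simp: atLeast0LessThan intro!: sum_mono r p)
  finally show "tdeg (signof p * (\<Prod>i = 0..<m. M $$ (i, p i))) \<le> (\<Sum>i<m. r i)" .
qed

lemma tdeg_cofactor_last_row:
  fixes J :: "'a::comm_ring_1 mpoly mat"
  assumes J: "J \<in> carrier_mat (Suc N) (Suc N)"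
    and r: "\<And>i j. i < N \<Longrightarrow> j < Suc N \<Longrightarrow> tdeg (J $$ (i, j)) \<le> r i"
  shows "tdeg (cofactor J N j) \<le> (\<Sum>i<N. r i)"
proof -
  have "tdeg (det (mat_delete J N j)) \<le> (\<Sum>i<N. r i)"
    using J by (intro tdeg_det_le) (auto simp: mat_delete_def intro!: r)
  then show ?thesis unfolding cofactor_def by (cases "even (N + j)") auto
qed

section \<open>The Jacobian matrix of a polynomial automorphism\<close>

definition jacobian :: "nat \<Rightarrow> (nat \<Rightarrow> 'a::comm_ring_1 mpoly) \<Rightarrow> 'a mpoly mat" where
  "jacobian n \<Phi> = mat n n (\<lambda>(i, j). mpderiv j (\<Phi> i))"

lemma dim_jacobian [simp]: "dim_row (jacobian n \<Phi>) = n" "dim_col (jacobian n \<Phi>) = n"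
  by (simp_all add: jacobian_def)

lemma jacobian_carrier [simp]: "jacobian n \<Phi> \<in> carrier_mat n n"
  by (simp add: carrier_matI)

lemma jacobian_mult_msubst_jacobian_inverse:
  fixes \<Phi> \<Psi> :: "nat \<Rightarrow> 'a::comm_ring_1 mpoly"
  assumes "\<forall>i<n. in_vars n (\<Phi> i)" "\<forall>i<n. in_vars n (\<Psi> i)"
    and "\<forall>i<n. msubst \<Psi> (\<Phi> i) = mvar i" "\<forall>i<n. msubst \<Phi> (\<Psi> i) = mvar i"
  shows "jacobian n \<Phi> * map_mat (msubst \<Phi>) (jacobian n \<Psi>) = 1\<^sub>m n"
proof -
  have "(\<Sum>l\<in>{0..<n}. mpderiv l (\<Phi> i) * msubst \<Phi> (mpderiv j (\<Psi> l))) = (if i = j then 1 else 0)"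
    if ij: "i < n" "j < n" for i j
  proof -
    have "mpderiv j (msubst \<Psi> (\<Phi> i)) = (\<Sum>l\<in>{0..<n}. msubst \<Psi> (mpderiv l (\<Phi> i)) * mpderiv j (\<Psi> l))"
      using assms(1) ij by (intro mpderiv_msubst) (auto simp: in_vars_def atLeast0LessThan)
    then have "msubst \<Phi> (mpderiv j (mvar i)) =
        (\<Sum>l\<in>{0..<n}. mpderiv l (\<Phi> i) * msubst \<Phi> (mpderiv j (\<Psi> l)))"
      using assms ij by (simp add: msubst_sum msubst_mult msubst_left_inverse in_vars_mpderiv)
    then show ?thesis by (cases "i = j") (simp_all add: mpderiv_mvar)
  qed
  then show ?thesis
    by (intro eq_matI) (auto simp: jacobian_def scalar_prod_def)
qed

lemma adj_mat_eq_det_smult_right_inverse: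
  assumes J: "J \<in> carrier_mat n n" and A: "A \<in> carrier_mat n n" and "J * A = 1\<^sub>m n"
  shows "adj_mat J = det J \<cdot>\<^sub>m A"
proof -
  have "adj_mat J = adj_mat J * (J * A)" using assms adj_mat(1)[OF J] by simp
  also have "\<dots> = (adj_mat J * J) * A" using adj_mat(1)[OF J] J A by simp
  also have "\<dots> = (det J \<cdot>\<^sub>m 1\<^sub>m n) * A" using adj_mat(3)[OF J] by simp
  also have "\<dots> = det J \<cdot>\<^sub>m A" using A by (simp add: mult_smult_assoc_mat[of "1\<^sub>m n" n n A])
  finally show ?thesis .
qed

lemma det_const_if_right_inverse:
  fixes J A :: "'a::idom mpoly mat"
  assumes "J \<in> carrier_mat n n" "A \<in> carrier_mat n n" "J * A = 1\<^sub>m n"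
  obtains c where "c \<noteq> 0" "det J = single 0 c"
proof -
  have "det J * det A = 1"
    using det_mult[OF assms(1,2)] assms(3) by simp
  moreover from this obtain c where "det J = single 0 c" using mpoly_unit_const by blast
  ultimately show ?thesis by (intro that) auto
qed

lemma det_jacobian_mult_msubst_mpderiv:
  fixes \<Phi> \<Psi> :: "nat \<Rightarrow> 'a::comm_ring_1 mpoly"
  assumes "\<forall>i<n. in_vars n (\<Phi> i)" "\<forall>i<n. in_vars n (\<Psi> i)"
    and "\<forall>i<n. msubst \<Psi> (\<Phi> i) = mvar i" "\<forall>i<n. msubst \<Phi> (\<Psi> i) = mvar i"
    and "in_vars n Q" "N < n"
  shows "det (jacobian n \<Phi>) * msubst \<Phi> (mpderiv N Q) =
           (\<Sum>j<n. mpderiv j (msubst \<Phi> Q) * cofactor (jacobian n \<Phi>) N j)"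
proof -
  let ?J = "jacobian n \<Phi>" and ?A = "map_mat (msubst \<Phi>) (jacobian n \<Psi>)"
  have inverse: "?J * ?A = 1\<^sub>m n"
    using assms(1-4) by (rule jacobian_mult_msubst_jacobian_inverse)
  have cofactor: "cofactor ?J N j = det ?J * ?A $$ (j, N)" if "j < n" for j
  proof -
    have "adj_mat ?J $$ (j, N) = (det ?J \<cdot>\<^sub>m ?A) $$ (j, N)"
      using adj_mat_eq_det_smult_right_inverse[OF jacobian_carrier _ inverse] by simp
    then show ?thesis using that assms(6) by (simp add: adj_mat_def)
  qed
  have chain: "mpderiv j (msubst \<Phi> Q) = (\<Sum>i<n. msubst \<Phi> (mpderiv i Q) * ?J $$ (i, j))" if "j < n" for j
    using assms(5) that by (subst mpderiv_msubst[where I = "{..<n}"]) (auto simp: in_vars_def jacobian_def)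
  have entry: "(\<Sum>j<n. ?J $$ (i, j) * ?A $$ (j, N)) = (if i = N then 1 else 0)" if "i < n" for i
  proof -
    have "(?J * ?A) $$ (i, N) = 1\<^sub>m n $$ (i, N)" by (simp only: inverse)
    then show ?thesis using that assms(6) by (simp add: scalar_prod_def atLeast0LessThan)
  qed
  have "(\<Sum>j<n. mpderiv j (msubst \<Phi> Q) * cofactor ?J N j)
      = (\<Sum>j<n. \<Sum>i<n. det ?J * msubst \<Phi> (mpderiv i Q) * (?J $$ (i, j) * ?A $$ (j, N)))"
    by (intro sum.cong refl) (simp add: chain cofactor sum_distrib_left sum_distrib_right ac_simps)
  also have "\<dots> = det ?J * (\<Sum>i<n. msubst \<Phi> (mpderiv i Q) * (\<Sum>j<n. ?J $$ (i, j) * ?A $$ (j, N)))"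
    by (subst sum.swap) (simp add: sum_distrib_left mult.assoc)
  also have "\<dots> = det ?J * (\<Sum>i<n. if i = N then msubst \<Phi> (mpderiv i Q) else 0)"
    by (intro arg_cong2[where f = "(*)"] sum.cong refl) (simp_all add: entry)
  also have "\<dots> = det ?J * msubst \<Phi> (mpderiv N Q)"
    using assms(6) by simp
  finally show ?thesis ..
qed

section \<open>The degree estimate\<close>

lemma tdeg_automorphism_component_pos:
  assumes "poly_automorphism n \<Phi>" "i < n"
  shows "tdeg (\<Phi> i :: 'a::comm_ring_1 mpoly) \<ge> 1"
proof (rule ccontr)
  assume "\<not> tdeg (\<Phi> i) \<ge> 1"
  then have "\<Phi> i = single 0 (lookup (\<Phi> i) 0)"
    by (intro tdeg_eq_0_imp_const) simp
  moreover obtain \<Psi> where "msubst \<Psi> (\<Phi> i) = mvar i"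
    using assms unfolding poly_automorphism_def by blast
  ultimately have "mvar i = single 0 (lookup (\<Phi> i) 0)"
    by (metis msubst_const)
  then show False
    unfolding mvar_def by (metis lookup_single_eq lookup_single_not_eq single_zero zero_neq_one)
qed

lemma tdeg_msubst_pos:
  assumes "poly_automorphism n \<Phi>" "in_vars n Q" "mpderiv j Q \<noteq> 0"
  shows "tdeg (msubst \<Phi> Q :: 'a::comm_ring_1 mpoly) \<ge> 1"
proof (rule ccontr)
  assume "\<not> tdeg (msubst \<Phi> Q) \<ge> 1"
  then have "msubst \<Phi> Q = single 0 (lookup (msubst \<Phi> Q) 0)"
    by (intro tdeg_eq_0_imp_const) simp
  moreover obtain \<Psi> where "\<forall>i<n. msubst \<Psi> (\<Phi> i) = mvar i"
    using assms(1) unfolding poly_automorphism_def by blast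
  ultimately have "Q = single 0 (lookup (msubst \<Phi> Q) 0)"
    using assms(2) by (metis msubst_const msubst_left_inverse)
  then show False using assms(3) by (metis mpderiv_const)
qed

lemma tdeg_msubst_mpderiv_le:
  fixes \<Phi> :: "nat \<Rightarrow> 'a::idom mpoly"
  assumes "poly_automorphism (Suc N) \<Phi>" "in_vars (Suc N) Q"
  shows "tdeg (msubst \<Phi> (mpderiv N Q)) \<le> (tdeg (msubst \<Phi> Q) - 1) + (\<Sum>i<N. tdeg (\<Phi> i) - 1)"
proof -
  let ?J = "jacobian (Suc N) \<Phi>"
  obtain \<Psi> where vars: "\<forall>i<Suc N. in_vars (Suc N) (\<Phi> i)" "\<forall>i<Suc N. in_vars (Suc N) (\<Psi> i)"
    and inv: "\<forall>i<Suc N. msubst \<Psi> (\<Phi> i) = mvar i" "\<forall>i<Suc N. msubst \<Phi> (\<Psi> i) = mvar i"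
    using assms(1) unfolding poly_automorphism_def by blast
  obtain c where c: "c \<noteq> 0" "det ?J = single 0 c"
    by (rule det_const_if_right_inverse[OF jacobian_carrier _ jacobian_mult_msubst_jacobian_inverse[OF vars inv]])
       auto
  have "tdeg (msubst \<Phi> (mpderiv N Q)) = tdeg (det ?J * msubst \<Phi> (mpderiv N Q))"
    using c by (simp add: tdeg_const_mult)
  also have "\<dots> \<le> (tdeg (msubst \<Phi> Q) - 1) + (\<Sum>i<N. tdeg (\<Phi> i) - 1)"
    unfolding det_jacobian_mult_msubst_mpderiv[OF vars inv assms(2) lessI]
  proof (rule tdeg_sum_le)
    fix j
    have "tdeg (cofactor ?J N j) \<le> (\<Sum>i<N. tdeg (\<Phi> i) - 1)"
      using tdeg_mpderiv by (intro tdeg_cofactor_last_row) (auto simp: jacobian_def)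
    then show "tdeg (mpderiv j (msubst \<Phi> Q) * cofactor ?J N j)
        \<le> (tdeg (msubst \<Phi> Q) - 1) + (\<Sum>i<N. tdeg (\<Phi> i) - 1)"
      using tdeg_mult_le[of "mpderiv j (msubst \<Phi> Q)" "cofactor ?J N j"] tdeg_mpderiv[of j "msubst \<Phi> Q"]
      by linarith
  qed
  finally show ?thesis .
qed

lemma tdeg_msubst_mpderiv_last:
  fixes \<Phi> :: "nat \<Rightarrow> 'a::idom mpoly"
  assumes "poly_automorphism (Suc N) \<Phi>" "in_vars (Suc N) Q" "mpderiv N Q \<noteq> 0"
  shows "int (tdeg (msubst \<Phi> (mpderiv N Q))) + int (tdeg (\<Phi> N))
           \<le> int (tdeg (msubst \<Phi> Q)) + ((\<Sum>i<Suc N. int (tdeg (\<Phi> i))) - int (Suc N))"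
proof -
  have "int (tdeg (msubst \<Phi> (mpderiv N Q)))
      \<le> int (tdeg (msubst \<Phi> Q) - 1) + int (\<Sum>i<N. tdeg (\<Phi> i) - 1)"
    using tdeg_msubst_mpderiv_le[OF assms(1,2)] by linarith
  moreover have "int (\<Sum>i<N. tdeg (\<Phi> i) - 1) = (\<Sum>i<N. int (tdeg (\<Phi> i)) - 1)"
    using tdeg_automorphism_component_pos[OF assms(1)] by (simp add: of_nat_diff)
  moreover have "(\<Sum>i<N. int (tdeg (\<Phi> i)) - 1) = (\<Sum>i<N. int (tdeg (\<Phi> i))) - int N"
    by (simp add: sum_subtractf)
  moreover have "int (tdeg (msubst \<Phi> Q) - 1) = int (tdeg (msubst \<Phi> Q)) - 1"
    using tdeg_msubst_pos[OF assms] by simp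
  ultimately show ?thesis by simp
qed

theorem mainTheorem13:
  fixes \<Phi> :: "nat \<Rightarrow> 'a::{alg_closed_field, field_char_0} mpoly"
    and P :: "'a mpoly" and n k :: nat
  assumes "n \<ge> 1"
    and "poly_automorphism n \<Phi>"
    and "in_vars n P"
    and "((mpderiv (n - 1)) ^^ k) P \<noteq> 0"
  shows "int (tdeg (msubst \<Phi> P)) \<ge>
           int (tdeg (msubst \<Phi> (((mpderiv (n - 1)) ^^ k) P)))
           + int k * int (tdeg (\<Phi> (n - 1)))
           - int k * ((\<Sum>i<n. int (tdeg (\<Phi> i))) - int n)"
  using assms(4)
proof (induction k)
  case (Suc k)
  obtain N where n: "n = Suc N" using assms(1) by (cases n) auto
  have "in_vars n ((mpderiv N ^^ k) P)"
    using assms(3) by (induction k) (auto simp: in_vars_mpderiv)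
  then have "int (tdeg (msubst \<Phi> (mpderiv N ((mpderiv N ^^ k) P)))) + int (tdeg (\<Phi> N))
      \<le> int (tdeg (msubst \<Phi> ((mpderiv N ^^ k) P))) + ((\<Sum>i<n. int (tdeg (\<Phi> i))) - int n)"
    using assms(2) Suc.prems unfolding n by (intro tdeg_msubst_mpderiv_last) auto
  moreover have "(mpderiv N ^^ k) P \<noteq> 0" using Suc.prems n by auto
  ultimately show ?case using Suc.IH n by (simp add: algebra_simps)
qed simp

end
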